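(* Let $m\ge 3$. Call $\mathbf{x}=(x_1,\ldots,x_m)\in\mathbb{R}^m$ generic if the $\binom{m}{2}$ midpoints $x_{ij}:=(x_i+x_j)/2$, $1\le i<j\le m$, are pairwise distinct (in particular the $x_i$ are pairwise distinct). For such $\mathbf{x}$ define its ranking pattern $$\mathrm{RP}^{\mathrm{UF}}(\mathbf{x})=\{(i_1\cdots i_m)\in\mathbb{P}_m:\ |y-x_{i_1}|<|y-x_{i_2}|<\cdots<|y-x_{i_m}|\text{ for some }y\in\mathbb{R}\},$$ where $\mathbb{P}_m$ is the set of permutations $(i_1\cdots i_m)$ of $[m]=\{1,\ldots,m\}$. Let $$r(m)=\bigl|\{\mathrm{RP}^{\mathrm{UF}}(\mathbf{x}):\ \mathbf{x}\in\mathbb{R}^m\text{ generic}\}\bigr|,\qquad r_0(m)=\bigl|\{\mathrm{RP}^{\mathrm{UF}}(\mathbf{x}):\ \mathbf{x}\in\mathbb{R}^m\text{ generic},\ x_1<\cdots<x_m\}\bigr|.$$ Let $\mathcal{M}_m$ be the mid-hyperplane arrangement in $\mathbb{R}^m$ consisting of the hyperplanes $\{x_i=x_j\}$ for $1\le i<j\le m$ together with the hyperplanes $\{x_i+x_j=x_k+x_l\}$ for all $(i,j,k,l)$ with $i,j,k,l$ pairwise distinct, $1\le i<j\le m$, $i<k<l\le m$. Then $$r(m)=\frac{m!}{2}\,r_0(m)=\frac{|\mathrm{ch}(\mathcal{M}_m)|}{2},$$ where $\mathrm{ch}(\mathcal{M}_m)$ denotes the set of chambers (connected components of the complement of the union of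 the hyperplanes) of $\mathcal{M}_m$.
   Context: Generic $\mathbf{x}$ are exactly the points of $\mathbb{R}^m$ not lying on any hyperplane of $\mathcal{M}_m$. *)

theory Defs
  imports "HOL-Analysis.Analysis"
begin

text \<open>Indices are 0-based: [m] is rendered as {0..<m}.  A point of R^m is a
function nat => real vanishing outside {0..<m}; nat => real carries the product
topology, so this subspace is (homeomorphic to) Euclidean R^m.\<close>

definition Rm :: "nat \<Rightarrow> (nat \<Rightarrow> real) set" where
  "Rm m = {x. \<forall>i\<ge>m. x i = 0}"

definition generic :: "nat \<Rightarrow> (nat \<Rightarrow> real) \<Rightarrow> bool" where
  "generic m x \<longleftrightarrow>
     (\<forall>i j k l. i < j \<and> j < m \<and> k < l \<and> l < m \<and> (i, j) \<noteq> (k, l)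
        \<longrightarrow> (x i + x j) / 2 \<noteq> (x k + x l) / 2)"

definition perms :: "nat \<Rightarrow> nat list set" where
  "perms m = {p. distinct p \<and> set p = {0..<m}}"

definition ranking_pattern :: "nat \<Rightarrow> (nat \<Rightarrow> real) \<Rightarrow> nat list set" where
  "ranking_pattern m x =
     {p \<in> perms m. \<exists>y::real. \<forall>k. Suc k < m \<longrightarrow> \<bar>y - x (p ! k)\<bar> < \<bar>y - x (p ! Suc k)\<bar>}"

definition r :: "nat \<Rightarrow> nat" where
  "r m = card {ranking_pattern m x | x. x \<in> Rm m \<and> generic m x}"

definition r0 :: "nat \<Rightarrow> nat" where
  "r0 m = card {ranking_pattern m x | x. x \<in> Rm m \<and> generic m x \<and>
                  (\<forall>i. Suc i < m \<longrightarrow> x i < x (Suc i))}"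

definition mid_hyperplanes :: "nat \<Rightarrow> (nat \<Rightarrow> real) set set" where
  "mid_hyperplanes m =
     {{x \<in> Rm m. x i = x j} | i j. i < j \<and> j < m} \<union>
     {{x \<in> Rm m. x i + x j = x k + x l} | i j k l.
        i < j \<and> j < m \<and> i < k \<and> k < l \<and> l < m \<and>
        i \<noteq> k \<and> i \<noteq> l \<and> j \<noteq> k \<and> j \<noteq> l}"

definition chambers :: "nat \<Rightarrow> (nat \<Rightarrow> real) set set" where
  "chambers m =
     (let C = Rm m - \<Union>(mid_hyperplanes m)
      in {connected_component_set C x | x. x \<in> C})"

end

theory Submission
  imports Defs
begin

text \<open>A generic point \<open>x\<close> has a sign vector recording, for every pair of pair-sums
\<open>x\<^sub>a + x\<^sub>b\<close> and \<open>x\<^sub>c + x\<^sub>d\<close>, which one is smaller; the chambers of \<open>\<M>\<^sub>m\<close> are exactly the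
sets of generic points with a fixed sign vector (each such set is convex, and a linear form that
never vanishes has constant sign on a connected set).

The ranking from a viewpoint \<open>y\<close> only depends on which midpoints lie to the left of \<open>y\<close>, so
the ranking pattern is a function of the sign vector. Conversely, the rankings from far left and
far right fix the order of the \<open>x\<^sub>i\<close> up to reversal, and once the orientation is fixed the
ranking from a viewpoint between two midpoints decides their order. Hence ranking patterns
correspond to chambers modulo the reflection \<open>x \<mapsto> -x\<close>, which has no fixed chamber:
\<open>r(m) = |ch(\<M>\<^sub>m)|/2\<close>. Finally, the permutations of the coordinates act freely on the chambers
and every orbit meets the cone \<open>x\<^sub>1 < \<dots> < x\<^sub>m\<close> exactly once, so \<open>|ch(\<M>\<^sub>m)| = m! r\<^sub>0(m)\<close>.\<close>

section \<open>Generic points and the mid-hyperplane arrangement\<close>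

lemma generic_iff_pair_sums:
  "generic m x \<longleftrightarrow> (\<forall>a b c d. a < m \<longrightarrow> b < m \<longrightarrow> c < m \<longrightarrow> d < m \<longrightarrow> a \<noteq> b \<longrightarrow> c \<noteq> d \<longrightarrow>
      x a + x b = x c + x d \<longrightarrow> (a = c \<and> b = d) \<or> (a = d \<and> b = c))" (is "?L \<longleftrightarrow> ?R")
proof
  assume ?L
  show ?R
  proof (intro allI impI)
    fix a b c d
    assume h: "a < m" "b < m" "c < m" "d < m" "a \<noteq> b" "c \<noteq> d" "x a + x b = x c + x d"
    have "(min a b, max a b) = (min c d, max c d)"
    proof (rule ccontr)
      assume "(min a b, max a b) \<noteq> (min c d, max c d)"
      moreover have "x (min a b) + x (max a b) = x (min c d) + x (max c d)"
        using h by (auto simp: min_def max_def)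
      moreover have "min a b < max a b" "max a b < m" "min c d < max c d" "max c d < m"
        using h by auto
      ultimately show False using \<open>?L\<close> unfolding generic_def by fastforce
    qed
    with h show "(a = c \<and> b = d) \<or> (a = d \<and> b = c)"
      by (auto simp: min_def max_def split: if_splits)
  qed
next
  assume ?R
  show ?L
    unfolding generic_def
  proof (intro allI impI)
    fix i j k l assume "i < j \<and> j < m \<and> k < l \<and> l < m \<and> (i, j) \<noteq> (k, l)"
    then show "(x i + x j) / 2 \<noteq> (x k + x l) / 2"
      using \<open>?R\<close>[rule_format, of i j k l] by auto
  qed
qed

lemma generic_eq_iff:
  assumes "m \<ge> 3" "generic m x" "a < m" "b < m"
  shows "x a = x b \<longleftrightarrow> a = b"
proof -
  have "\<exists>e<m. e \<noteq> a \<and> e \<noteq> b" using assms(1) by presburger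
  then obtain e where "e < m" "e \<noteq> a" "e \<noteq> b" by blast
  then show ?thesis
    using assms(2)[unfolded generic_iff_pair_sums, rule_format, of a e b e] assms(3,4) by auto
qed

lemma generic_sum_eq_iff:
  assumes "m \<ge> 3" "generic m x" "a < m" "b < m" "c < m" "d < m" "(a = b) = (c = d)"
  shows "x a + x b = x c + x d \<longleftrightarrow> (a = c \<and> b = d) \<or> (a = d \<and> b = c)"
proof (cases "a = b")
  case True
  then have "c = d" using assms(7) by simp
  with True show ?thesis using generic_eq_iff[OF assms(1,2,3,5)] by auto
next
  case False
  then have "c \<noteq> d" using assms(7) by simp
  with False show ?thesis
    using assms(2)[unfolded generic_iff_pair_sums] assms(3-6) by (auto simp: add.commute)
qed

lemma generic_uminus: "generic m (- x) \<longleftrightarrow> generic m x"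
proof -
  have "(- x) a + (- x) b = (- x) c + (- x) d \<longleftrightarrow> x a + x b = x c + x d" for a b c d
    by auto
  then show ?thesis unfolding generic_iff_pair_sums by presburger
qed

definition generic_points :: "nat \<Rightarrow> (nat \<Rightarrow> real) set" where
  "generic_points m = {x \<in> Rm m. generic m x}"

lemma in_mid_hyperplanes_iff:
  assumes "x \<in> Rm m"
  shows "x \<in> \<Union>(mid_hyperplanes m) \<longleftrightarrow>
    (\<exists>i j. i < j \<and> j < m \<and> x i = x j) \<or>
    (\<exists>i j k l. i < j \<and> j < m \<and> i < k \<and> k < l \<and> l < m \<and>
       i \<noteq> k \<and> i \<noteq> l \<and> j \<noteq> k \<and> j \<noteq> l \<and> x i + x j = x k + x l)"
  using assms unfolding mid_hyperplanes_def by blast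

lemma not_generic_in_mid_hyperplanes:
  assumes "x \<in> Rm m" "\<not> generic m x"
  shows "x \<in> \<Union>(mid_hyperplanes m)"
proof -
  have diagonal: "x \<in> \<Union>(mid_hyperplanes m)" if "u < m" "v < m" "u \<noteq> v" "x u = x v" for u v
    using that unfolding in_mid_hyperplanes_iff[OF assms(1)] by (metis linorder_neqE_nat)
  obtain a b c d where abcd: "a < m" "b < m" "c < m" "d < m" "a \<noteq> b" "c \<noteq> d"
    "x a + x b = x c + x d" "\<not> ((a = c \<and> b = d) \<or> (a = d \<and> b = c))"
    using assms(2) unfolding generic_iff_pair_sums by blast
  consider "a = c" | "a = d" | "b = c" | "b = d" | "a \<noteq> c \<and> a \<noteq> d \<and> b \<noteq> c \<and> b \<noteq> d"
    by blast
  then show ?thesis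
  proof cases
    case 5
    define i j k l where "i = min (min a b) (min c d)" "j = (if min a b < min c d then max a b else max c d)"
      "k = max (min a b) (min c d)" "l = (if min a b < min c d then max c d else max a b)"
    have "x i + x j = x k + x l"
      using abcd(7) unfolding i_j_k_l_def by (auto simp: min_def max_def add.commute)
    moreover have "i < j \<and> j < m \<and> i < k \<and> k < l \<and> l < m \<and> i \<noteq> k \<and> i \<noteq> l \<and> j \<noteq> k \<and> j \<noteq> l"
      using abcd(1-6) 5 unfolding i_j_k_l_def by (auto simp: min_def max_def)
    ultimately show ?thesis unfolding in_mid_hyperplanes_iff[OF assms(1)] by blast
  qed (use abcd diagonal in auto)
qed

lemma complement_mid_hyperplanes:
  assumes "m \<ge> 3"
  shows "Rm m - \<Union>(mid_hyperplanes m) = generic_points m"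
proof -
  have "x \<notin> \<Union>(mid_hyperplanes m)" if "generic m x" "x \<in> Rm m" for x
  proof -
    have "x i \<noteq> x j" if "i < j" "j < m" for i j
      using generic_eq_iff[OF assms \<open>generic m x\<close>, of i j] that by auto
    moreover have "x i + x j \<noteq> x k + x l" if "i < j" "j < m" "k < l" "l < m" "i \<noteq> k" for i j k l
      using generic_sum_eq_iff[OF assms \<open>generic m x\<close>, of i j k l] that by auto
    ultimately show ?thesis unfolding in_mid_hyperplanes_iff[OF that(2)] by blast
  qed
  then show ?thesis
    unfolding generic_points_def using not_generic_in_mid_hyperplanes by blast
qed

section \<open>Rankings from a viewpoint\<close>

lemma abs_diff_less_abs_diff_iff:
  fixes y u v :: real
  assumes "u \<noteq> v" "u + v \<noteq> 2 * y"
  shows "\<bar>y - u\<bar> < \<bar>y - v\<bar> \<longleftrightarrow> (u < v \<longleftrightarrow> 2 * y < u + v)"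
  using assms by arith

lemma abs_diff_eq_abs_diff_iff:
  fixes y u v :: real
  shows "\<bar>y - u\<bar> = \<bar>y - v\<bar> \<longleftrightarrow> u = v \<or> 2 * y = u + v"
  by arith

definition ranked_from :: "nat \<Rightarrow> (nat \<Rightarrow> real) \<Rightarrow> real \<Rightarrow> nat list \<Rightarrow> bool" where
  "ranked_from m x y p \<longleftrightarrow> (\<forall>k. Suc k < m \<longrightarrow> \<bar>y - x (p ! k)\<bar> < \<bar>y - x (p ! Suc k)\<bar>)"

lemma ranking_pattern_ranked_from:
  "ranking_pattern m x = {p \<in> perms m. \<exists>y. ranked_from m x y p}"
  by (simp add: ranking_pattern_def ranked_from_def)

lemma length_perms: "p \<in> perms m \<Longrightarrow> length p = m"
  unfolding perms_def using distinct_card[of p] by auto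

lemma perms_nth_less: "p \<in> perms m \<Longrightarrow> i < m \<Longrightarrow> p ! i < m"
  using length_perms[of p m] nth_mem[of i p] unfolding perms_def by auto

lemma perms_nth_eq_iff: "p \<in> perms m \<Longrightarrow> i < m \<Longrightarrow> j < m \<Longrightarrow> p ! i = p ! j \<longleftrightarrow> i = j"
  using length_perms[of p m] nth_eq_iff_index_eq[of p i j] unfolding perms_def by auto

lemma ranked_from_nth_less_iff:
  assumes p: "p \<in> perms m" and ranked: "ranked_from m x y p" and "i < m" "j < m"
  shows "\<bar>y - x (p ! i)\<bar> < \<bar>y - x (p ! j)\<bar> \<longleftrightarrow> i < j"
proof -
  define closer where "closer u v \<longleftrightarrow> \<bar>y - x u\<bar> < \<bar>y - x v\<bar>" for u v
  have "transp closer" unfolding closer_def transp_def by auto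
  then have "sorted_wrt closer p"
    unfolding sorted_wrt_iff_nth_Suc_transp[OF \<open>transp closer\<close>]
    using ranked length_perms[OF p] unfolding ranked_from_def closer_def by auto
  then have "closer (p ! i) (p ! j)" if "i < j" "j < m" "i < m" for i j
    using sorted_wrt_nth_less that length_perms[OF p] by metis
  from this[of i j] this[of j i] show ?thesis
    using assms(3,4) unfolding closer_def by (cases i j rule: linorder_cases) auto
qed

lemma perms_nth_cases:
  assumes "p \<in> perms m" "a < m"
  obtains i where "i < m" "p ! i = a"
proof -
  have "a \<in> set p" using assms unfolding perms_def by auto
  then show ?thesis using that length_perms[OF assms(1)] by (auto simp: in_set_conv_nth)
qed

lemma ranked_from_distinct_distances:
  assumes "p \<in> perms m" "ranked_from m x y p" "a < m" "b < m" "a \<noteq> b"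
  shows "\<bar>y - x a\<bar> \<noteq> \<bar>y - x b\<bar>"
proof -
  obtain i where i: "i < m" "p ! i = a" using perms_nth_cases[OF assms(1,3)] .
  obtain j where j: "j < m" "p ! j = b" using perms_nth_cases[OF assms(1,4)] .
  have "i \<noteq> j" using i j assms(5) by blast
  moreover have "\<bar>y - x a\<bar> < \<bar>y - x b\<bar> \<longleftrightarrow> i < j" "\<bar>y - x b\<bar> < \<bar>y - x a\<bar> \<longleftrightarrow> j < i"
    using ranked_from_nth_less_iff[OF assms(1,2)] i j by blast+
  ultimately show ?thesis by linarith
qed

lemma ranked_from_same_perm:
  assumes "p \<in> perms m" "ranked_from m x y p" "ranked_from m x' z p" "a < m" "b < m"
  shows "\<bar>y - x a\<bar> < \<bar>y - x b\<bar> \<longleftrightarrow> \<bar>z - x' a\<bar> < \<bar>z - x' b\<bar>"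
proof -
  obtain i where i: "i < m" "p ! i = a" using perms_nth_cases[OF assms(1,4)] .
  obtain j where j: "j < m" "p ! j = b" using perms_nth_cases[OF assms(1,5)] .
  show ?thesis
    using ranked_from_nth_less_iff[OF assms(1,2) i(1) j(1)] ranked_from_nth_less_iff[OF assms(1,3) i(1) j(1)]
    unfolding i(2) j(2) by blast
qed

lemma ranked_from_midpoint_ne:
  assumes "p \<in> perms m" "ranked_from m x y p" "a < m" "b < m" "a \<noteq> b"
  shows "x a + x b \<noteq> 2 * y"
  using ranked_from_distinct_distances[OF assms]
    abs_diff_eq_abs_diff_iff[where y = y and u = "x a" and v = "x b"] by auto

lemma ranked_from_closer_iff:
  assumes "m \<ge> 3" "generic m x" "p \<in> perms m" "ranked_from m x y p" "a < m" "b < m" "a \<noteq> b"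
  shows "\<bar>y - x a\<bar> < \<bar>y - x b\<bar> \<longleftrightarrow> (x a < x b \<longleftrightarrow> 2 * y < x a + x b)"
proof (rule abs_diff_less_abs_diff_iff)
  show "x a \<noteq> x b" using generic_eq_iff[OF assms(1,2,5,6)] assms(7) by simp
  show "x a + x b \<noteq> 2 * y" using ranked_from_midpoint_ne[OF assms(3-7)] .
qed

lemma sorting_perm_exists:
  fixes f :: "nat \<Rightarrow> real"
  assumes "inj_on f {..<m}"
  shows "\<exists>p \<in> perms m. \<forall>i. Suc i < m \<longrightarrow> f (p ! i) < f (p ! Suc i)"
proof -
  define p where "p = sort_key f [0..<m]"
  have p: "set p = {0..<m}" "distinct p" "length p = m" unfolding p_def by auto
  have "sorted (map f p)" unfolding p_def by (rule sorted_sort_key)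
  moreover have "distinct (map f p)" using p assms by (simp add: distinct_map atLeast0LessThan)
  ultimately have "sorted_wrt (<) (map f p)" using strict_sorted_iff by blast
  then have "\<forall>i. Suc i < m \<longrightarrow> f (p ! i) < f (p ! Suc i)"
    using sorted_wrt_nth_less[of "(<)" "map f p"] p by auto
  moreover have "p \<in> perms m" unfolding perms_def using p by auto
  ultimately show ?thesis by blast
qed

lemma ranked_from_exists:
  assumes "inj_on (\<lambda>i. \<bar>y - x i\<bar>) {..<m}"
  shows "\<exists>p \<in> perms m. ranked_from m x y p"
  using sorting_perm_exists[OF assms] unfolding ranked_from_def .

lemma far_viewpoints_exist:
  fixes x :: "nat \<Rightarrow> real"
  obtains y\<^sub>0 y\<^sub>1 where
    "\<And>a b. a < m \<Longrightarrow> b < m \<Longrightarrow> \<bar>y\<^sub>0 - x a\<bar> < \<bar>y\<^sub>0 - x b\<bar> \<longleftrightarrow> x a < x b"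
    "\<And>a b. a < m \<Longrightarrow> b < m \<Longrightarrow> \<bar>y\<^sub>1 - x a\<bar> < \<bar>y\<^sub>1 - x b\<bar> \<longleftrightarrow> x b < x a"
proof -
  define B where "B = (\<Sum>i<m. \<bar>x i\<bar>) + 1"
  have dist: "\<bar>- B - x i\<bar> = x i + B" "\<bar>B - x i\<bar> = B - x i" if "i < m" for i
  proof -
    have "\<bar>x i\<bar> \<le> (\<Sum>i<m. \<bar>x i\<bar>)" using member_le_sum[of i "{..<m}" "\<lambda>i. \<bar>x i\<bar>"] that by simp
    then have "- B < x i" "x i < B" using abs_le_iff[of "x i"] unfolding B_def by linarith+
    then show "\<bar>- B - x i\<bar> = x i + B" "\<bar>B - x i\<bar> = B - x i" by simp_all
  qed
  show ?thesis by (rule that[of "- B" B]) (simp_all add: dist)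
qed

lemma ranking_pattern_uminus: "ranking_pattern m (- x) = ranking_pattern m x"
proof -
  have "ranked_from m (- x) (- y) p = ranked_from m x y p" for p y
    unfolding ranked_from_def by (simp add: abs_minus_commute)
  then show ?thesis
    unfolding ranking_pattern_ranked_from by (metis minus_minus)
qed

section \<open>Sign vectors\<close>

text \<open>A quadruple \<open>(a, b, c, d)\<close> compares \<open>x\<^sub>a + x\<^sub>b\<close> with \<open>x\<^sub>c + x\<^sub>d\<close>; for \<open>a = b\<close> and \<open>c = d\<close>
this is the comparison of \<open>x\<^sub>a\<close> with \<open>x\<^sub>c\<close>, otherwise that of two midpoints. Mixed quadruples
are excluded since they do not correspond to hyperplanes of \<open>\<M>\<^sub>m\<close>.\<close>

definition quads :: "nat \<Rightarrow> (nat \<times> nat \<times> nat \<times> nat) list" where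
  "quads m = filter (\<lambda>(a, b, c, d). (a = b) = (c = d))
     (List.product [0..<m] (List.product [0..<m] (List.product [0..<m] [0..<m])))"

definition sign_vector :: "nat \<Rightarrow> (nat \<Rightarrow> real) \<Rightarrow> bool list" where
  "sign_vector m x = map (\<lambda>(a, b, c, d). x a + x b < x c + x d) (quads m)"

lemma sign_vector_eq_iff:
  "sign_vector m x = sign_vector m x' \<longleftrightarrow>
    (\<forall>a b c d. a < m \<longrightarrow> b < m \<longrightarrow> c < m \<longrightarrow> d < m \<longrightarrow> (a = b) = (c = d) \<longrightarrow>
       (x a + x b < x c + x d \<longleftrightarrow> x' a + x' b < x' c + x' d))"
  unfolding sign_vector_def quads_def map_eq_conv by auto

lemma finite_sign_vectors: "finite (sign_vector m ` A)"
proof (rule finite_subset)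
  show "sign_vector m ` A \<subseteq> {l. set l \<subseteq> UNIV \<and> length l = length (quads m)}"
    unfolding sign_vector_def by auto
qed (intro finite_lists_length_eq finite)

lemma sign_vector_eq_sum_less_iff:
  assumes "sign_vector m x = sign_vector m x'" "a < m" "b < m" "c < m" "d < m" "(a = b) = (c = d)"
  shows "x a + x b < x c + x d \<longleftrightarrow> x' a + x' b < x' c + x' d"
  using assms unfolding sign_vector_eq_iff by blast

lemma sign_vector_eq_less_iff:
  assumes "sign_vector m x = sign_vector m x'" "a < m" "b < m"
  shows "x a < x b \<longleftrightarrow> x' a < x' b"
  using assms(1)[unfolded sign_vector_eq_iff, rule_format, of a a b b] assms(2,3) by simp

lemma sign_vector_eq_sum_eq_iff:
  assumes "sign_vector m x = sign_vector m x'" "a < m" "b < m" "c < m" "d < m" "(a = b) = (c = d)"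
  shows "x a + x b = x c + x d \<longleftrightarrow> x' a + x' b = x' c + x' d"
  using assms(1)[unfolded sign_vector_eq_iff, rule_format, of a b c d]
    assms(1)[unfolded sign_vector_eq_iff, rule_format, of c d a b] assms(2-6)
  by (metis linorder_neqE_linordered_idom order_less_irrefl)

lemma generic_if_sign_vector_eq:
  assumes "m \<ge> 3" "generic m x" "sign_vector m x = sign_vector m x'"
  shows "generic m x'"
  unfolding generic_iff_pair_sums
  using sign_vector_eq_sum_eq_iff[OF assms(3)] generic_sum_eq_iff[OF assms(1,2)] by metis

lemma sign_vector_uminus_eq_iff:
  "sign_vector m (- x) = sign_vector m (- x') \<longleftrightarrow> sign_vector m x = sign_vector m x'"
proof -
  have "(- x) a + (- x) b < (- x) c + (- x) d \<longleftrightarrow> x c + x d < x a + x b"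
    for x :: "nat \<Rightarrow> real" and a b c d
    by auto
  then show ?thesis unfolding sign_vector_eq_iff by blast
qed

section \<open>Ranking patterns and sign vectors\<close>

lemma finite_reals_separated:
  fixes L U :: "real set"
  assumes "finite L" "finite U" "\<forall>l\<in>L. \<forall>u\<in>U. l < u"
  shows "\<exists>w. (\<forall>l\<in>L. l < w) \<and> (\<forall>u\<in>U. w < u)"
proof (cases "L = {}")
  case True
  show ?thesis
  proof (cases "U = {}")
    case True then show ?thesis using \<open>L = {}\<close> by auto
  next
    case False
    have "\<forall>u\<in>U. Min U - 1 < u" using Min_le[OF assms(2)] by fastforce
    then show ?thesis using True by auto
  qed
next
  case LF: False
  show ?thesis
  proof (cases "U = {}")
    case True
    have "\<forall>l\<in>L. l < Max L + 1" using Max_ge[OF assms(1)] by fastforce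
    then show ?thesis using True by auto
  next
    case False
    have "Max L < Min U" using assms LF False Max_in Min_in by blast
    have "\<forall>l\<in>L. l < (Max L + Min U) / 2" using Max_ge[OF assms(1)] \<open>Max L < Min U\<close> by fastforce
    moreover have "\<forall>u\<in>U. (Max L + Min U) / 2 < u" using Min_le[OF assms(2)] \<open>Max L < Min U\<close> by fastforce
    ultimately show ?thesis by blast
  qed
qed

lemma sign_vector_eq_cut:
  assumes sv: "sign_vector m x = sign_vector m x'"
    and avoid: "\<And>u v. u < m \<Longrightarrow> v < m \<Longrightarrow> u \<noteq> v \<Longrightarrow> x u + x v \<noteq> t"
  obtains w where "\<And>u v. u < m \<Longrightarrow> v < m \<Longrightarrow> u \<noteq> v \<Longrightarrow>
    (t < x u + x v \<longleftrightarrow> w < x' u + x' v) \<and> x' u + x' v \<noteq> w"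
proof -
  define pairs where "pairs = {(u, v). u < m \<and> v < m \<and> u \<noteq> v}"
  define L where "L = (\<lambda>(u, v). x' u + x' v) ` {(u, v) \<in> pairs. x u + x v < t}"
  define U where "U = (\<lambda>(u, v). x' u + x' v) ` {(u, v) \<in> pairs. t < x u + x v}"
  have "finite pairs" unfolding pairs_def by (rule finite_subset[of _ "{..<m} \<times> {..<m}"]) auto
  then have "finite L" "finite U"
    unfolding L_def U_def by (intro finite_imageI rev_finite_subset[OF \<open>finite pairs\<close>]; auto)+
  moreover have "\<forall>l\<in>L. \<forall>u\<in>U. l < u"
  proof (intro ballI)
    fix l u assume "l \<in> L" "u \<in> U"
    then obtain a b c d where ab: "(a, b) \<in> pairs" "x a + x b < t" "l = x' a + x' b"
      and cd: "(c, d) \<in> pairs" "t < x c + x d" "u = x' c + x' d"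
      unfolding L_def U_def by auto
    from ab(1) cd(1) have abcd: "a < m" "b < m" "c < m" "d < m" "(a = b) = (c = d)"
      unfolding pairs_def by auto
    have "x a + x b < x c + x d" using ab(2) cd(2) by linarith
    then have "x' a + x' b < x' c + x' d" by (rule sign_vector_eq_sum_less_iff[OF sv abcd, THEN iffD1])
    then show "l < u" unfolding ab(3) cd(3) .
  qed
  ultimately have "\<exists>w. (\<forall>l\<in>L. l < w) \<and> (\<forall>u\<in>U. w < u)"
    by (rule finite_reals_separated)
  then obtain w where w: "\<forall>l\<in>L. l < w" "\<forall>u\<in>U. w < u" by blast
  have "(t < x u + x v \<longleftrightarrow> w < x' u + x' v) \<and> x' u + x' v \<noteq> w"
    if "u < m" "v < m" "u \<noteq> v" for u v
  proof (cases "x u + x v < t")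
    case True
    have "x' u + x' v \<in> L"
      unfolding L_def pairs_def by (rule image_eqI[where x = "(u, v)"]) (use that True in auto)
    then show ?thesis using w(1) True by auto
  next
    case False
    then have "t < x u + x v" using avoid[OF that] by linarith
    have "x' u + x' v \<in> U"
      unfolding U_def pairs_def by (rule image_eqI[where x = "(u, v)"]) (use that \<open>t < x u + x v\<close> in auto)
    then show ?thesis using w(2) \<open>t < x u + x v\<close> by auto
  qed
  then show ?thesis using that by blast
qed

lemma ranking_pattern_subset_if_sign_vector_eq:
  assumes m: "m \<ge> 3" and gx: "generic m x" and gx': "generic m x'"
    and sv: "sign_vector m x = sign_vector m x'"
  shows "ranking_pattern m x \<subseteq> ranking_pattern m x'"
proof
  fix p assume "p \<in> ranking_pattern m x"
  then obtain y where p: "p \<in> perms m" and ranked: "ranked_from m x y p"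
    unfolding ranking_pattern_ranked_from by blast
  obtain w where w: "\<And>u v. u < m \<Longrightarrow> v < m \<Longrightarrow> u \<noteq> v \<Longrightarrow>
      (2 * y < x u + x v \<longleftrightarrow> w < x' u + x' v) \<and> x' u + x' v \<noteq> w"
    using sign_vector_eq_cut[OF sv ranked_from_midpoint_ne[OF p ranked]] by blast
  have step: "\<bar>w / 2 - x' a\<bar> < \<bar>w / 2 - x' b\<bar>"
    if closer: "\<bar>y - x a\<bar> < \<bar>y - x b\<bar>" and ab: "a < m" "b < m" "a \<noteq> b" for a b
  proof -
    have "x' a \<noteq> x' b" using generic_eq_iff[OF m gx' ab(1,2)] ab(3) by simp
    moreover have "x' a + x' b \<noteq> 2 * (w / 2)" using w[OF ab] by simp
    ultimately have "\<bar>w / 2 - x' a\<bar> < \<bar>w / 2 - x' b\<bar> \<longleftrightarrow> (x' a < x' b \<longleftrightarrow> w < x' a + x' b)"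
      by (simp add: abs_diff_less_abs_diff_iff)
    moreover have "x a < x b \<longleftrightarrow> 2 * y < x a + x b"
      using ranked_from_closer_iff[OF m gx p ranked ab] closer by blast
    ultimately show ?thesis
      using sign_vector_eq_less_iff[OF sv ab(1,2)] w[OF ab] by blast
  qed
  have "ranked_from m x' (w / 2) p"
    unfolding ranked_from_def
  proof (intro allI impI)
    fix k assume k: "Suc k < m"
    then have "p ! k < m" "p ! Suc k < m" "p ! k \<noteq> p ! Suc k"
      using perms_nth_less[OF p] perms_nth_eq_iff[OF p] by auto
    then show "\<bar>w / 2 - x' (p ! k)\<bar> < \<bar>w / 2 - x' (p ! Suc k)\<bar>"
      using step ranked[unfolded ranked_from_def, rule_format, OF k] by blast
  qed
  with p show "p \<in> ranking_pattern m x'"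
    unfolding ranking_pattern_ranked_from by blast
qed

lemma ranking_pattern_eq_if_sign_vector_eq:
  assumes "m \<ge> 3" "generic m x" "generic m x'" "sign_vector m x = sign_vector m x'"
  shows "ranking_pattern m x = ranking_pattern m x'"
  using ranking_pattern_subset_if_sign_vector_eq[OF assms]
    ranking_pattern_subset_if_sign_vector_eq[OF assms(1,3,2) assms(4)[symmetric]] by blast

text \<open>Seen from far left the ranking is the order of the \<open>x\<^sub>i\<close>, seen from far right its reverse.
The viewpoints \<open>z\<close>, \<open>z'\<close> realizing these two rankings for \<open>x'\<close> are therefore separated by every
midpoint of \<open>x'\<close>, and the one on the left sees the order of the \<open>x'\<^sub>i\<close>.\<close>

lemma ranking_pattern_eq_orientation:
  assumes m: "m \<ge> 3" and gx: "generic m x" and gx': "generic m x'"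
    and rp: "ranking_pattern m x = ranking_pattern m x'"
  shows "(\<forall>a<m. \<forall>b<m. x a < x b \<longleftrightarrow> x' a < x' b) \<or> (\<forall>a<m. \<forall>b<m. x a < x b \<longleftrightarrow> x' b < x' a)"
proof -
  obtain y\<^sub>0 y\<^sub>1 where
    far_left: "\<And>a b. a < m \<Longrightarrow> b < m \<Longrightarrow> \<bar>y\<^sub>0 - x a\<bar> < \<bar>y\<^sub>0 - x b\<bar> \<longleftrightarrow> x a < x b" and
    far_right: "\<And>a b. a < m \<Longrightarrow> b < m \<Longrightarrow> \<bar>y\<^sub>1 - x a\<bar> < \<bar>y\<^sub>1 - x b\<bar> \<longleftrightarrow> x b < x a"
    using far_viewpoints_exist[where m = m and x = x] by blast
  have distinct: "x a \<noteq> x b" if "a < m" "b < m" "a \<noteq> b" for a b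
    using generic_eq_iff[OF m gx that(1,2)] that(3) by simp
  have "\<bar>y\<^sub>0 - x a\<bar> \<noteq> \<bar>y\<^sub>0 - x b\<bar>" "\<bar>y\<^sub>1 - x a\<bar> \<noteq> \<bar>y\<^sub>1 - x b\<bar>"
    if "a < m" "b < m" "a \<noteq> b" for a b
    using distinct[OF that] far_left[OF that(1,2)] far_left[OF that(2,1)]
      far_right[OF that(1,2)] far_right[OF that(2,1)] by argo+
  then have "inj_on (\<lambda>i. \<bar>y\<^sub>0 - x i\<bar>) {..<m}" "inj_on (\<lambda>i. \<bar>y\<^sub>1 - x i\<bar>) {..<m}"
    unfolding inj_on_def lessThan_iff by blast+
  then obtain p q where p: "p \<in> perms m" "ranked_from m x y\<^sub>0 p"
    and q: "q \<in> perms m" "ranked_from m x y\<^sub>1 q"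
    using ranked_from_exists by meson
  then obtain z z' where z: "ranked_from m x' z p" and z': "ranked_from m x' z' q"
    using rp unfolding ranking_pattern_ranked_from by blast
  have left: "\<bar>z - x' a\<bar> < \<bar>z - x' b\<bar> \<longleftrightarrow> x a < x b"
    and right: "\<bar>z' - x' a\<bar> < \<bar>z' - x' b\<bar> \<longleftrightarrow> x b < x a" if "a < m" "b < m" for a b
    using ranked_from_same_perm[OF p z that] ranked_from_same_perm[OF q z' that]
      far_left[OF that] far_right[OF that] by simp_all
  have opposite: "2 * z < x' a + x' b \<longleftrightarrow> \<not> 2 * z' < x' a + x' b"
    if "a < m" "b < m" "a \<noteq> b" for a b
    using distinct[OF that] left[OF that(1,2)] right[OF that(1,2)]
      ranked_from_closer_iff[OF m gx' p(1) z that] ranked_from_closer_iff[OF m gx' q(1) z' that]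
    by argo
  have "z \<noteq> z'" using opposite[of 0 1] m by auto
  then consider "z < z'" | "z' < z" by linarith
  then show ?thesis
  proof cases
    case 1
    have "x a < x b \<longleftrightarrow> x' a < x' b" if "a < m" "b < m" "a \<noteq> b" for a b
    proof -
      have "2 * z < x' a + x' b" using opposite[OF that] 1 by linarith
      then show ?thesis using left[OF that(1,2)] ranked_from_closer_iff[OF m gx' p(1) z that] by argo
    qed
    then show ?thesis by (metis order_less_irrefl)
  next
    case 2
    have "x a < x b \<longleftrightarrow> x' b < x' a" if "a < m" "b < m" "a \<noteq> b" for a b
    proof -
      have "2 * z' < x' b + x' a" using opposite[OF that] 2 by linarith
      then show ?thesis
        using right[OF that(2,1)] ranked_from_closer_iff[OF m gx' q(1) z' that(2,1)] that(3) by argo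
    qed
    then show ?thesis by (metis order_less_irrefl)
  qed
qed

lemma exists_between_avoiding:
  fixes S :: "real set"
  assumes "finite S" "u < v"
  obtains w where "u < w" "w < v" "w \<notin> S"
proof -
  have "infinite ({u<..<v} - S)" using assms by (simp add: Diff_infinite_finite)
  then obtain w where "w \<in> {u<..<v} - S" using infinite_imp_nonempty by blast
  then show ?thesis using that by auto
qed

lemma sum_less_if_ranking_pattern_eq:
  assumes m: "m \<ge> 3" and gx: "generic m x" and gx': "generic m x'"
    and rp: "ranking_pattern m x = ranking_pattern m x'"
    and order: "\<forall>a<m. \<forall>b<m. x a < x b \<longleftrightarrow> x' a < x' b"
    and abcd: "a < m" "b < m" "c < m" "d < m" "a \<noteq> b" "c \<noteq> d"
    and less: "x a + x b < x c + x d"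
  shows "x' a + x' b < x' c + x' d"
proof -
  define S where "S = (\<lambda>(u, v). x u + x v) ` ({..<m} \<times> {..<m})"
  have "finite S" unfolding S_def by simp
  then obtain w where w: "x a + x b < w" "w < x c + x d" "w \<notin> S"
    using exists_between_avoiding less by blast
  have avoid: "x u + x v \<noteq> w" if "u < m" "v < m" for u v
    using w(3) that unfolding S_def by force
  have "inj_on (\<lambda>i. \<bar>w / 2 - x i\<bar>) {..<m}"
  proof (rule inj_onI)
    fix u v assume "u \<in> {..<m}" "v \<in> {..<m}" "\<bar>w / 2 - x u\<bar> = \<bar>w / 2 - x v\<bar>"
    then have "x u = x v" using avoid[of u v] abs_diff_eq_abs_diff_iff[where y = "w / 2"] by auto
    then show "u = v" using generic_eq_iff[OF m gx] \<open>u \<in> {..<m}\<close> \<open>v \<in> {..<m}\<close> by auto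
  qed
  then obtain p where p: "p \<in> perms m" "ranked_from m x (w / 2) p"
    using ranked_from_exists by blast
  then obtain z where z: "ranked_from m x' z p"
    using rp unfolding ranking_pattern_ranked_from by blast
  have side: "w < x u + x v \<longleftrightarrow> 2 * z < x' u + x' v" if "u < m" "v < m" "u \<noteq> v" for u v
  proof -
    have "x u < x v \<longleftrightarrow> x' u < x' v" using order that(1,2) by blast
    then show ?thesis
      using ranked_from_closer_iff[OF m gx p that] ranked_from_closer_iff[OF m gx' p(1) z that]
        ranked_from_same_perm[OF p z that(1,2)] by argo
  qed
  have "x' a + x' b < 2 * z"
    using side[OF abcd(1,2,5)] w(1) ranked_from_midpoint_ne[OF p(1) z abcd(1,2,5)] by linarith
  moreover have "2 * z < x' c + x' d"
    using side[OF abcd(3,4,6)] w(2) by linarith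
  ultimately show ?thesis by linarith
qed

lemma sign_vector_eq_if_ranking_pattern_eq:
  assumes m: "m \<ge> 3" and gx: "generic m x" and gx': "generic m x'"
    and rp: "ranking_pattern m x = ranking_pattern m x'"
    and order: "\<forall>a<m. \<forall>b<m. x a < x b \<longleftrightarrow> x' a < x' b"
  shows "sign_vector m x = sign_vector m x'"
  unfolding sign_vector_eq_iff
proof (intro allI impI)
  fix a b c d assume h: "a < m" "b < m" "c < m" "d < m" "(a = b) = (c = d)"
  show "x a + x b < x c + x d \<longleftrightarrow> x' a + x' b < x' c + x' d"
  proof (cases "a = b")
    case True
    then have "c = d" using h(5) by simp
    then show ?thesis using True order h(1,3) by simp
  next
    case False
    then have "c \<noteq> d" using h(5) by simp
    note less = sum_less_if_ranking_pattern_eq[OF m gx gx' rp order]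
    have "x' a + x' b = x' c + x' d" if "x a + x b = x c + x d"
      using that generic_sum_eq_iff[OF m gx h] generic_sum_eq_iff[OF m gx' h] by simp
    then show ?thesis
      using less[OF h(1-4) False \<open>c \<noteq> d\<close>] less[OF h(3,4,1,2) \<open>c \<noteq> d\<close> False] by linarith
  qed
qed

definition oriented_points :: "nat \<Rightarrow> (nat \<Rightarrow> real) set" where
  "oriented_points m = {x \<in> generic_points m. x 0 < x 1}"

lemma ranking_pattern_eq_iff_sign_vector_eq:
  assumes m: "m \<ge> 3" and x: "x \<in> oriented_points m" and x': "x' \<in> oriented_points m"
  shows "ranking_pattern m x = ranking_pattern m x' \<longleftrightarrow> sign_vector m x = sign_vector m x'"
proof -
  have g: "generic m x" "generic m x'" and "x 0 < x 1" "x' 0 < x' 1"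
    using x x' unfolding oriented_points_def generic_points_def by auto
  show ?thesis
  proof
    assume rp: "ranking_pattern m x = ranking_pattern m x'"
    have "\<not> (\<forall>a<m. \<forall>b<m. x a < x b \<longleftrightarrow> x' b < x' a)"
      using \<open>x 0 < x 1\<close> \<open>x' 0 < x' 1\<close> m by force
    then show "sign_vector m x = sign_vector m x'"
      using ranking_pattern_eq_orientation[OF m g rp] sign_vector_eq_if_ranking_pattern_eq[OF m g rp]
      by blast
  qed (rule ranking_pattern_eq_if_sign_vector_eq[OF m g])
qed

section \<open>Chambers\<close>

lemma connected_constant_sign:
  fixes f :: "'a::topological_space \<Rightarrow> real"
  assumes "connected S" "continuous_on S f" "\<And>y. y \<in> S \<Longrightarrow> f y \<noteq> 0" "x \<in> S" "y \<in> S"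
  shows "f x < 0 \<longleftrightarrow> f y < 0"
proof -
  have conn: "connected (f ` S)" using connected_continuous_image assms(1,2) by blast
  have "\<not> (f u < 0 \<and> 0 < f v)" if "u \<in> S" "v \<in> S" for u v
    using connectedD_interval[OF conn, of "f u" "f v" 0] that assms(3) by force
  then show ?thesis
    using assms(3)[OF assms(4)] assms(3)[OF assms(5)] assms(4,5) by (meson linorder_neqE_linordered_idom)
qed

lemma sign_vector_constant_on_component:
  assumes m: "m \<ge> 3" and y: "y \<in> connected_component_set (generic_points m) x"
  shows "sign_vector m y = sign_vector m x"
  unfolding sign_vector_eq_iff
proof (intro allI impI)
  define K where "K = connected_component_set (generic_points m) x"
  have K: "connected K" "K \<subseteq> generic_points m" "x \<in> K" "y \<in> K"
    using y connected_component_in[OF y[unfolded mem_Collect_eq]] unfolding K_def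
    by (auto simp: connected_component_subset)
  fix a b c d assume h: "a < m" "b < m" "c < m" "d < m" "(a = b) = (c = d)"
  show "y a + y b < y c + y d \<longleftrightarrow> x a + x b < x c + x d"
  proof (cases "(a = c \<and> b = d) \<or> (a = d \<and> b = c)")
    case True
    then show ?thesis by auto
  next
    case False
    have "z a + z b - (z c + z d) \<noteq> 0" if "z \<in> K" for z
      using that K(2) generic_sum_eq_iff[OF m _ h] False unfolding generic_points_def by auto
    moreover have "continuous_on K (\<lambda>z::nat \<Rightarrow> real. z a + z b - (z c + z d))"
      by (intro continuous_intros continuous_on_subset[OF continuous_on_product_coordinates]) simp_all
    ultimately have "y a + y b - (y c + y d) < 0 \<longleftrightarrow> x a + x b - (x c + x d) < 0"
      using connected_constant_sign[OF K(1) _ _ K(4,3)] by blast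
    then show ?thesis by simp
  qed
qed

lemma convex_combination_neg_iff:
  fixes A B t :: real
  assumes "0 \<le> t" "t \<le> 1" "A < 0 \<longleftrightarrow> B < 0"
  shows "(1 - t) * A + t * B < 0 \<longleftrightarrow> A < 0"
proof (cases "A < 0")
  case True
  then have "(1 - t) * A \<le> 0" "t * B \<le> 0" "(1 - t) * A < 0 \<or> t * B < 0"
    using assms by (auto simp: mult_nonneg_nonpos mult_pos_neg mult_less_0_iff)
  then show ?thesis using True by linarith
next
  case False
  then have "0 \<le> (1 - t) * A" "0 \<le> t * B" using assms by auto
  then show ?thesis using False by linarith
qed

lemma sign_class_path_connected:
  assumes m: "m \<ge> 3" and x: "x \<in> generic_points m"
  shows "path_connected {y \<in> generic_points m. sign_vector m y = sign_vector m x}"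
  unfolding path_connected_def
proof (intro ballI)
  let ?C = "{y \<in> generic_points m. sign_vector m y = sign_vector m x}"
  fix x1 x2 assume x1: "x1 \<in> ?C" and x2: "x2 \<in> ?C"
  define g where "g t = (\<lambda>i. (1 - t) * x1 i + t * x2 i)" for t :: real
  have "g t \<in> ?C" if t: "t \<in> {0..1}" for t
  proof -
    have "sign_vector m (g t) = sign_vector m x1"
      unfolding sign_vector_eq_iff
    proof (intro allI impI)
      fix a b c d assume h: "a < m" "b < m" "c < m" "d < m" "(a = b) = (c = d)"
      have "sign_vector m x1 = sign_vector m x2" using x1 x2 by simp
      from sign_vector_eq_sum_less_iff[OF this h]
      have "x1 a + x1 b - (x1 c + x1 d) < 0 \<longleftrightarrow> x2 a + x2 b - (x2 c + x2 d) < 0" by simp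
      with t have "(1 - t) * (x1 a + x1 b - (x1 c + x1 d)) + t * (x2 a + x2 b - (x2 c + x2 d)) < 0
          \<longleftrightarrow> x1 a + x1 b - (x1 c + x1 d) < 0"
        by (intro convex_combination_neg_iff) auto
      moreover have "g t a + g t b - (g t c + g t d) =
          (1 - t) * (x1 a + x1 b - (x1 c + x1 d)) + t * (x2 a + x2 b - (x2 c + x2 d))"
        unfolding g_def by (simp add: algebra_simps)
      ultimately show "g t a + g t b < g t c + g t d \<longleftrightarrow> x1 a + x1 b < x1 c + x1 d"
        by (metis diff_less_0_iff_less)
    qed
    moreover have "g t \<in> Rm m" using x1 x2 unfolding g_def generic_points_def Rm_def by auto
    moreover have "generic m x1" using x1 unfolding generic_points_def by simp
    ultimately show ?thesis
      using x1 generic_if_sign_vector_eq[OF m, of x1 "g t"] unfolding generic_points_def by simp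
  qed
  moreover have "continuous_on {0..1} g"
    unfolding g_def by (intro continuous_on_coordinatewise_then_product continuous_intros)
  ultimately show "\<exists>g. path g \<and> path_image g \<subseteq> ?C \<and> pathstart g = x1 \<and> pathfinish g = x2"
    unfolding path_def path_image_def pathstart_def pathfinish_def
    by (intro exI[of _ g]) (auto simp: g_def)
qed

lemma connected_component_generic_points:
  assumes "m \<ge> 3" "x \<in> generic_points m"
  shows "connected_component_set (generic_points m) x =
    {y \<in> generic_points m. sign_vector m y = sign_vector m x}"
proof
  show "connected_component_set (generic_points m) x \<subseteq>
      {y \<in> generic_points m. sign_vector m y = sign_vector m x}"
    using sign_vector_constant_on_component[OF assms(1)] connected_component_subset by blast
  show "{y \<in> generic_points m. sign_vector m y = sign_vector m x} \<subseteq>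
      connected_component_set (generic_points m) x"
    by (rule connected_component_maximal)
      (use assms sign_class_path_connected path_connected_imp_connected in auto)
qed

lemma card_chambers:
  assumes "m \<ge> 3"
  shows "card (chambers m) = card (sign_vector m ` generic_points m)"
proof -
  define fibre where "fibre v = {y \<in> generic_points m. sign_vector m y = v}" for v
  have "chambers m = fibre ` sign_vector m ` generic_points m"
    unfolding chambers_def Let_def complement_mid_hyperplanes[OF assms] fibre_def
    using connected_component_generic_points[OF assms] by auto
  moreover have "inj_on fibre (sign_vector m ` generic_points m)"
    unfolding fibre_def by (rule inj_onI) blast
  ultimately show ?thesis by (simp add: card_image)
qed

section \<open>Counting\<close>

lemma card_image_eq_card_image:
  assumes "\<And>x y. x \<in> A \<Longrightarrow> y \<in> A \<Longrightarrow> f x = f y \<longleftrightarrow> g x = g y"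
  shows "card (f ` A) = card (g ` A)"
proof -
  define h where "h v = g (inv_into A f v)" for v
  have hf: "h (f x) = g x" if "x \<in> A" for x
    unfolding h_def using assms that inv_into_into[of "f x" f A] f_inv_into_f[of "f x" f A] by auto
  then have "g ` A = h ` f ` A" by (auto simp: image_image)
  moreover have "inj_on h (f ` A)" unfolding inj_on_def using hf assms by auto
  ultimately show ?thesis by (simp add: card_image)
qed

lemma uminus_generic_points: "- x \<in> generic_points m \<longleftrightarrow> x \<in> generic_points m"
  by (simp add: generic_points_def Rm_def generic_uminus)

lemma generic_points_split:
  assumes m: "m \<ge> 3"
  shows "generic_points m = oriented_points m \<union> uminus ` oriented_points m"
proof
  show "generic_points m \<subseteq> oriented_points m \<union> uminus ` oriented_points m"
  proof
    fix x assume x: "x \<in> generic_points m"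
    show "x \<in> oriented_points m \<union> uminus ` oriented_points m"
    proof (cases "x 0 < x 1")
      case True
      then show ?thesis using x unfolding oriented_points_def by simp
    next
      case False
      moreover have "x 0 \<noteq> x 1"
        using generic_eq_iff[OF m, of x 0 1] x m unfolding generic_points_def by simp
      ultimately have "- x \<in> oriented_points m"
        using x uminus_generic_points unfolding oriented_points_def by simp
      then have "x \<in> uminus ` oriented_points m" by (rule rev_image_eqI) (simp add: fun_eq_iff)
      then show ?thesis by simp
    qed
  qed
  show "oriented_points m \<union> uminus ` oriented_points m \<subseteq> generic_points m"
    using uminus_generic_points unfolding oriented_points_def by auto
qed

lemma card_sign_vectors_generic_points:
  assumes m: "m \<ge> 3"
  shows "card (sign_vector m ` generic_points m) = 2 * card (sign_vector m ` oriented_points m)"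
proof -
  have "sign_vector m x \<noteq> sign_vector m (- y)" if "x \<in> oriented_points m" "y \<in> oriented_points m" for x y
    using that sign_vector_eq_less_iff[of m x "- y" 0 1] m unfolding oriented_points_def by auto
  then have "sign_vector m ` oriented_points m \<inter> sign_vector m ` uminus ` oriented_points m = {}"
    by blast
  moreover have "card (sign_vector m ` uminus ` oriented_points m) = card (sign_vector m ` oriented_points m)"
    unfolding image_image by (rule card_image_eq_card_image) (rule sign_vector_uminus_eq_iff)
  ultimately show ?thesis
    unfolding generic_points_split[OF m] image_Un
    by (simp add: card_Un_disjoint finite_sign_vectors)
qed

lemma r_eq_card_sign_vectors:
  assumes m: "m \<ge> 3"
  shows "r m = card (sign_vector m ` oriented_points m)"
proof -
  have "r m = card (ranking_pattern m ` generic_points m)"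
    unfolding r_def generic_points_def by (rule arg_cong[where f = card]) auto
  also have "ranking_pattern m ` generic_points m = ranking_pattern m ` oriented_points m"
    unfolding generic_points_split[OF m] image_Un image_image ranking_pattern_uminus by simp
  also have "card (ranking_pattern m ` oriented_points m) = card (sign_vector m ` oriented_points m)"
    by (rule card_image_eq_card_image) (rule ranking_pattern_eq_iff_sign_vector_eq[OF m])
  finally show ?thesis .
qed

definition increasing_points :: "nat \<Rightarrow> (nat \<Rightarrow> real) set" where
  "increasing_points m = {x \<in> generic_points m. \<forall>i. Suc i < m \<longrightarrow> x i < x (Suc i)}"

lemma r0_eq_card_sign_vectors:
  assumes m: "m \<ge> 3"
  shows "r0 m = card (sign_vector m ` increasing_points m)"
proof -
  have "r0 m = card (ranking_pattern m ` increasing_points m)"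
    unfolding r0_def increasing_points_def generic_points_def by (rule arg_cong[where f = card]) auto
  also have "\<dots> = card (sign_vector m ` increasing_points m)"
  proof (rule card_image_eq_card_image)
    fix x y assume "x \<in> increasing_points m" "y \<in> increasing_points m"
    then have "x \<in> oriented_points m" "y \<in> oriented_points m"
      using m unfolding increasing_points_def oriented_points_def by auto
    then show "ranking_pattern m x = ranking_pattern m y \<longleftrightarrow> sign_vector m x = sign_vector m y"
      by (rule ranking_pattern_eq_iff_sign_vector_eq[OF m])
  qed
  finally show ?thesis .
qed

lemma comp_permutes_generic_points:
  assumes p: "\<pi> permutes {..<m}" and x: "x \<in> generic_points m"
  shows "x \<circ> \<pi> \<in> generic_points m"
proof -
  have bound: "\<pi> i < m \<longleftrightarrow> i < m" for i using permutes_in_image[OF p, of i] by simp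
  have inj: "\<pi> i = \<pi> j \<longleftrightarrow> i = j" for i j using permutes_inj[OF p] by (simp add: inj_eq)
  have "generic m (x \<circ> \<pi>)"
    unfolding generic_iff_pair_sums o_apply
  proof (intro allI impI)
    fix a b c d
    assume "a < m" "b < m" "c < m" "d < m" "a \<noteq> b" "c \<noteq> d"
      "x (\<pi> a) + x (\<pi> b) = x (\<pi> c) + x (\<pi> d)"
    then have "(\<pi> a = \<pi> c \<and> \<pi> b = \<pi> d) \<or> (\<pi> a = \<pi> d \<and> \<pi> b = \<pi> c)"
      using x[unfolded generic_points_def, simplified, THEN conjunct2, unfolded generic_iff_pair_sums,
          rule_format, of "\<pi> a" "\<pi> b" "\<pi> c" "\<pi> d"]
      by (simp add: bound inj)
    then show "(a = c \<and> b = d) \<or> (a = d \<and> b = c)" by (simp add: inj)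
  qed
  moreover have "x \<circ> \<pi> \<in> Rm m"
    using x permutes_not_in[OF p] unfolding generic_points_def Rm_def by auto
  ultimately show ?thesis unfolding generic_points_def by simp
qed

lemma sign_vector_comp_permutes:
  assumes p: "\<pi> permutes {..<m}" and sv: "sign_vector m x = sign_vector m y"
  shows "sign_vector m (x \<circ> \<pi>) = sign_vector m (y \<circ> \<pi>)"
  unfolding sign_vector_eq_iff o_apply
proof (intro allI impI)
  have bound: "\<pi> i < m \<longleftrightarrow> i < m" for i using permutes_in_image[OF p, of i] by simp
  have inj: "\<pi> i = \<pi> j \<longleftrightarrow> i = j" for i j using permutes_inj[OF p] by (simp add: inj_eq)
  fix a b c d assume "a < m" "b < m" "c < m" "d < m" "(a = b) = (c = d)"
  then show "x (\<pi> a) + x (\<pi> b) < x (\<pi> c) + x (\<pi> d) \<longleftrightarrow> y (\<pi> a) + y (\<pi> b) < y (\<pi> c) + y (\<pi> d)"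
    by (intro sign_vector_eq_sum_less_iff[OF sv]) (simp_all add: bound inj)
qed

lemma sign_vector_comp_permutes_eq_iff:
  assumes p: "\<pi> permutes {..<m}"
  shows "sign_vector m (x \<circ> \<pi>) = sign_vector m (y \<circ> \<pi>) \<longleftrightarrow> sign_vector m x = sign_vector m y"
proof
  assume "sign_vector m (x \<circ> \<pi>) = sign_vector m (y \<circ> \<pi>)"
  from sign_vector_comp_permutes[OF permutes_inv[OF p] this]
  show "sign_vector m x = sign_vector m y" by (simp add: comp_assoc permutes_inv_o(1)[OF p])
qed (rule sign_vector_comp_permutes[OF p])

lemma less_iff_less_if_Suc_increasing:
  fixes x :: "nat \<Rightarrow> real"
  assumes inc: "\<forall>i. Suc i < m \<longrightarrow> x i < x (Suc i)" and "u < m" "v < m"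
  shows "x u < x v \<longleftrightarrow> u < v"
proof -
  have less: "x u < x v" if "u < v" "v < m" for u v
    using that
  proof (induction v)
    case (Suc v)
    show ?case
    proof (cases "u = v")
      case True
      then show ?thesis using inc Suc.prems by simp
    next
      case False
      then have "x u < x v" using Suc by simp
      also have "x v < x (Suc v)" using inc Suc.prems by simp
      finally show ?thesis .
    qed
  qed simp
  show ?thesis
    using less[of u v] less[of v u] assms(2,3) by (cases u v rule: linorder_cases) auto
qed

lemma permutes_eq_card_smaller:
  fixes \<pi> :: "nat \<Rightarrow> nat"
  assumes p: "\<pi> permutes {..<m}" and a: "a < m"
  shows "\<pi> a = card {b \<in> {..<m}. \<pi> b < \<pi> a}"
proof -
  have "\<pi> ` {b \<in> {..<m}. \<pi> b < \<pi> a} = {..<\<pi> a}"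
  proof
    show "\<pi> ` {b \<in> {..<m}. \<pi> b < \<pi> a} \<subseteq> {..<\<pi> a}" by auto
    show "{..<\<pi> a} \<subseteq> \<pi> ` {b \<in> {..<m}. \<pi> b < \<pi> a}"
    proof
      fix c assume c: "c \<in> {..<\<pi> a}"
      have "\<pi> a < m" using permutes_in_image[OF p, of a] a by simp
      then have "c \<in> \<pi> ` {..<m}" using c permutes_image[OF p] by auto
      then show "c \<in> \<pi> ` {b \<in> {..<m}. \<pi> b < \<pi> a}" using c by auto
    qed
  qed
  then show ?thesis
    using card_image[OF permutes_inj_on[OF p], of "{b \<in> {..<m}. \<pi> b < \<pi> a}"] by simp
qed

lemma permutes_eq_if_same_order:
  fixes \<pi> \<pi>' :: "nat \<Rightarrow> nat"
  assumes p: "\<pi> permutes {..<m}" and p': "\<pi>' permutes {..<m}"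
    and order: "\<And>a b. a < m \<Longrightarrow> b < m \<Longrightarrow> \<pi> a < \<pi> b \<longleftrightarrow> \<pi>' a < \<pi>' b"
  shows "\<pi> = \<pi>'"
proof
  fix a
  show "\<pi> a = \<pi>' a"
  proof (cases "a < m")
    case True
    then have "{b \<in> {..<m}. \<pi> b < \<pi> a} = {b \<in> {..<m}. \<pi>' b < \<pi>' a}" using order by auto
    then show ?thesis using permutes_eq_card_smaller[OF p True] permutes_eq_card_smaller[OF p' True] by simp
  qed (simp add: permutes_not_in[OF p] permutes_not_in[OF p'])
qed

lemma increasing_comp_permutes_exists:
  assumes m: "m \<ge> 3" and x: "x \<in> generic_points m"
  obtains \<sigma> where "\<sigma> permutes {..<m}" "x \<circ> \<sigma> \<in> increasing_points m"
proof -
  have "inj_on x {..<m}"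
    using generic_eq_iff[OF m] x unfolding generic_points_def by (auto intro: inj_onI)
  then obtain p where p: "p \<in> perms m" and inc: "\<forall>i. Suc i < m \<longrightarrow> x (p ! i) < x (p ! Suc i)"
    using sorting_perm_exists by blast
  define \<sigma> where "\<sigma> i = (if i < m then p ! i else i)" for i
  have "bij_betw ((!) p) {..<m} {..<m}"
    using bij_betw_nth[of p] p length_perms[OF p] unfolding perms_def by (simp add: atLeast0LessThan)
  then have "bij_betw \<sigma> {..<m} {..<m}" by (rule bij_betw_cong[THEN iffD1, rotated]) (simp add: \<sigma>_def)
  then have \<sigma>: "\<sigma> permutes {..<m}" by (rule bij_imp_permutes) (simp add: \<sigma>_def)
  moreover have "x \<circ> \<sigma> \<in> increasing_points m"
    using comp_permutes_generic_points[OF \<sigma> x] inc unfolding increasing_points_def \<sigma>_def by auto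
  ultimately show ?thesis using that by blast
qed

lemma permutes_eq_if_sign_vector_eq:
  assumes p: "\<pi> permutes {..<m}" and p': "\<pi>' permutes {..<m}"
    and x: "x \<in> increasing_points m" and y: "y \<in> increasing_points m"
    and sv: "sign_vector m (x \<circ> \<pi>) = sign_vector m (y \<circ> \<pi>')"
  shows "\<pi> = \<pi>'"
proof (rule permutes_eq_if_same_order[OF p p'])
  fix a b assume ab: "a < m" "b < m"
  have inc: "\<forall>i. Suc i < m \<longrightarrow> x i < x (Suc i)" "\<forall>i. Suc i < m \<longrightarrow> y i < y (Suc i)"
    using x y unfolding increasing_points_def by auto
  have "\<pi> a < m" "\<pi> b < m" "\<pi>' a < m" "\<pi>' b < m"
    using permutes_in_image[OF p] permutes_in_image[OF p'] ab by auto
  then have "x (\<pi> a) < x (\<pi> b) \<longleftrightarrow> \<pi> a < \<pi> b" "y (\<pi>' a) < y (\<pi>' b) \<longleftrightarrow> \<pi>' a < \<pi>' b"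
    using less_iff_less_if_Suc_increasing[OF inc(1)] less_iff_less_if_Suc_increasing[OF inc(2)] by blast+
  moreover have "x (\<pi> a) < x (\<pi> b) \<longleftrightarrow> y (\<pi>' a) < y (\<pi>' b)"
    using sign_vector_eq_less_iff[OF sv ab] by simp
  ultimately show "\<pi> a < \<pi> b \<longleftrightarrow> \<pi>' a < \<pi>' b" by argo
qed

lemma generic_points_UN_permutes:
  assumes m: "m \<ge> 3"
  shows "generic_points m = (\<Union>\<pi>\<in>{\<pi>. \<pi> permutes {..<m}}. (\<lambda>x. x \<circ> \<pi>) ` increasing_points m)"
proof
  show "(\<Union>\<pi>\<in>{\<pi>. \<pi> permutes {..<m}}. (\<lambda>x. x \<circ> \<pi>) ` increasing_points m) \<subseteq> generic_points m"
    by (auto simp: increasing_points_def intro: comp_permutes_generic_points)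
  show "generic_points m \<subseteq> (\<Union>\<pi>\<in>{\<pi>. \<pi> permutes {..<m}}. (\<lambda>x. x \<circ> \<pi>) ` increasing_points m)"
  proof
    fix x assume "x \<in> generic_points m"
    then obtain \<sigma> where \<sigma>: "\<sigma> permutes {..<m}" "x \<circ> \<sigma> \<in> increasing_points m"
      using increasing_comp_permutes_exists[OF m] by blast
    have "x \<in> (\<lambda>x. x \<circ> inv \<sigma>) ` increasing_points m"
      by (rule image_eqI[where x = "x \<circ> \<sigma>"]) (use \<sigma> in \<open>simp_all add: comp_assoc permutes_inv_o(1)\<close>)
    moreover have "inv \<sigma> permutes {..<m}" using permutes_inv[OF \<sigma>(1)] .
    ultimately show "x \<in> (\<Union>\<pi>\<in>{\<pi>. \<pi> permutes {..<m}}. (\<lambda>x. x \<circ> \<pi>) ` increasing_points m)" by blast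
  qed
qed

lemma card_sign_vectors_permutes:
  assumes m: "m \<ge> 3"
  shows "card (sign_vector m ` generic_points m) = fact m * card (sign_vector m ` increasing_points m)"
proof -
  define P where "P = {\<pi>. \<pi> permutes {..<m}}"
  define A where "A \<pi> = sign_vector m ` (\<lambda>x. x \<circ> \<pi>) ` increasing_points m" for \<pi>
  have "sign_vector m ` generic_points m = (\<Union>\<pi>\<in>P. A \<pi>)"
    unfolding generic_points_UN_permutes[OF m] A_def P_def by blast
  moreover have "card (\<Union>\<pi>\<in>P. A \<pi>) = (\<Sum>\<pi>\<in>P. card (A \<pi>))"
  proof (rule card_UN_disjoint)
    show "finite P" unfolding P_def by (rule finite_permutations) simp
    show "\<forall>\<pi>\<in>P. finite (A \<pi>)" unfolding A_def using finite_sign_vectors by blast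
    show "\<forall>\<pi>\<in>P. \<forall>\<pi>'\<in>P. \<pi> \<noteq> \<pi>' \<longrightarrow> A \<pi> \<inter> A \<pi>' = {}"
    proof (intro ballI impI)
      fix \<pi> \<pi>' assume "\<pi> \<in> P" "\<pi>' \<in> P" "\<pi> \<noteq> \<pi>'"
      show "A \<pi> \<inter> A \<pi>' = {}"
      proof (rule ccontr)
        assume "A \<pi> \<inter> A \<pi>' \<noteq> {}"
        then obtain x y where "x \<in> increasing_points m" "y \<in> increasing_points m"
          "sign_vector m (x \<circ> \<pi>) = sign_vector m (y \<circ> \<pi>')"
          unfolding A_def by auto
        then show False
          using permutes_eq_if_sign_vector_eq \<open>\<pi> \<in> P\<close> \<open>\<pi>' \<in> P\<close> \<open>\<pi> \<noteq> \<pi>'\<close> unfolding P_def by blast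
      qed
    qed
  qed
  moreover have "card (A \<pi>) = card (sign_vector m ` increasing_points m)" if "\<pi> \<in> P" for \<pi>
    unfolding A_def image_image
    by (rule card_image_eq_card_image, rule sign_vector_comp_permutes_eq_iff) (use that in \<open>simp add: P_def\<close>)
  moreover have "card P = fact m" unfolding P_def by (rule card_permutations) simp_all
  ultimately show ?thesis by simp
qed

theorem theorem3p2:
  fixes m :: nat
  assumes "m \<ge> 3"
  shows "real (r m) = fact m / 2 * real (r0 m) \<and>
         real (r m) = real (card (chambers m)) / 2"
proof -
  have "card (chambers m) = 2 * r m"
    using card_chambers card_sign_vectors_generic_points r_eq_card_sign_vectors assms by simp
  moreover have "2 * r m = fact m * r0 m"
    using card_sign_vectors_permutes card_sign_vectors_generic_points r_eq_card_sign_vectors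
      r0_eq_card_sign_vectors assms by simp
  then have "2 * real (r m) = fact m * real (r0 m)"
    by (metis of_nat_fact of_nat_mult of_nat_numeral)
  ultimately show ?thesis by simp
qed

end
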